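(* Let $\Lambda\subset\mathbb{Z}^n$ be an antichain lattice. Then $\Lambda$ is generic in the sense that it has a minimal Markov basis all of whose elements are fully supported if and only if $\Lambda$, as a subset of $\mathbb{Z}^n$, is generic in the sense that for every $\eta\in\mathbb{Z}^n$ with $T^o_\eta\cap\Lambda=\emptyset$, each face of $T_\eta$ contains at most one element of $\Lambda$.
   Context: An antichain lattice is a subgroup of $\mathbb{Z}^n$ whose distinct elements are pairwise incomparable in the componentwise order. $\alpha\in\mathbb{Z}^n$ is fully supported if $\alpha_i\ne0$ for all $i$. For $u\in\mathbb{N}^n$, the fiber $\mathcal{F}(u)=(u+\Lambda)\cap\mathbb{N}^n$. For a finite $\mathcal{B}\subseteq\Lambda$, $\mathcal{F}(u)_{\mathcal{B}}$ is the graph on $\mathcal{F}(u)$ with an edge $v$–$w$ iff $v-w\in\mathcal{B}$ or $w-v\in\mathcal{B}$. A Markov basis of $\Lambda$ is a finite $\mathcal{B}\subseteq\Lambda$ such that $\mathcal{F}(u)_{\mathcal{B}}$ is connected for every $u\in\mathbb{N}^n$; it is minimal if minimal under inclusion. $T_\eta=\eta-\mathbb{N}^n$, $T^o_\eta=\{\beta:\beta_i<\eta_i\ \forall i\}$; for nonempty $X\subseteq[n]$ the $X$-face of $T_\eta$ is $\{\alpha\in T_\eta:\alpha_i=\eta_i\ \forall i\in X\}$. *)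

theory Defs
  imports Main "HOL-Library.Function_Algebras"
begin

text \<open>Vectors in Z^n are functions from a finite index type 'n to int;
  the order on functions is the componentwise order.\<close>

definition is_lattice :: "('n::finite \<Rightarrow> int) set \<Rightarrow> bool" where
  "is_lattice L \<longleftrightarrow> 0 \<in> L \<and> (\<forall>a\<in>L. \<forall>b\<in>L. a + b \<in> L) \<and> (\<forall>a\<in>L. - a \<in> L)"

definition antichain_lattice :: "('n::finite \<Rightarrow> int) set \<Rightarrow> bool" where
  "antichain_lattice L \<longleftrightarrow> is_lattice L \<and>
     (\<forall>a\<in>L. \<forall>b\<in>L. a \<noteq> b \<longrightarrow> \<not> a \<le> b \<and> \<not> b \<le> a)"

definition fully_supported :: "('n::finite \<Rightarrow> int) \<Rightarrow> bool" where
  "fully_supported a \<longleftrightarrow> (\<forall>i. a i \<noteq> 0)"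

definition nonneg :: "('n::finite \<Rightarrow> int) \<Rightarrow> bool" where
  "nonneg u \<longleftrightarrow> (\<forall>i. 0 \<le> u i)"

definition fiber :: "('n::finite \<Rightarrow> int) set \<Rightarrow> ('n \<Rightarrow> int) \<Rightarrow> ('n \<Rightarrow> int) set" where
  "fiber L u = {v. v - u \<in> L \<and> nonneg v}"

definition fiber_edge :: "('n::finite \<Rightarrow> int) set \<Rightarrow> ('n \<Rightarrow> int) set \<Rightarrow> ('n \<Rightarrow> int)
    \<Rightarrow> ('n \<Rightarrow> int) \<Rightarrow> ('n \<Rightarrow> int) \<Rightarrow> bool" where
  "fiber_edge L B u v w \<longleftrightarrow> v \<in> fiber L u \<and> w \<in> fiber L u \<and> (v - w \<in> B \<or> w - v \<in> B)"

definition fiber_graph_connected :: "('n::finite \<Rightarrow> int) set \<Rightarrow> ('n \<Rightarrow> int) set \<Rightarrow> ('n \<Rightarrow> int) \<Rightarrow> bool" where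
  "fiber_graph_connected L B u \<longleftrightarrow>
     (\<forall>v\<in>fiber L u. \<forall>w\<in>fiber L u. (fiber_edge L B u)\<^sup>*\<^sup>* v w)"

definition markov_basis :: "('n::finite \<Rightarrow> int) set \<Rightarrow> ('n \<Rightarrow> int) set \<Rightarrow> bool" where
  "markov_basis L B \<longleftrightarrow> finite B \<and> B \<subseteq> L \<and> (\<forall>u. nonneg u \<longrightarrow> fiber_graph_connected L B u)"

definition minimal_markov_basis :: "('n::finite \<Rightarrow> int) set \<Rightarrow> ('n \<Rightarrow> int) set \<Rightarrow> bool" where
  "minimal_markov_basis L B \<longleftrightarrow> markov_basis L B \<and> (\<forall>C. C \<subset> B \<longrightarrow> \<not> markov_basis L C)"

definition T_cone :: "('n::finite \<Rightarrow> int) \<Rightarrow> ('n \<Rightarrow> int) set" where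
  "T_cone eta = {a. a \<le> eta}"

definition T_open :: "('n::finite \<Rightarrow> int) \<Rightarrow> ('n \<Rightarrow> int) set" where
  "T_open eta = {b. \<forall>i. b i < eta i}"

definition T_face :: "('n::finite \<Rightarrow> int) \<Rightarrow> 'n set \<Rightarrow> ('n \<Rightarrow> int) set" where
  "T_face eta X = {a \<in> T_cone eta. \<forall>i\<in>X. a i = eta i}"

definition generic_markov :: "('n::finite \<Rightarrow> int) set \<Rightarrow> bool" where
  "generic_markov L \<longleftrightarrow> (\<exists>B. minimal_markov_basis L B \<and> (\<forall>b\<in>B. fully_supported b))"

definition generic_faces :: "('n::finite \<Rightarrow> int) set \<Rightarrow> bool" where
  "generic_faces L \<longleftrightarrow> (\<forall>eta. T_open eta \<inter> L = {} \<longrightarrow>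
     (\<forall>X. X \<noteq> {} \<longrightarrow> (\<forall>a\<in>T_face eta X \<inter> L. \<forall>b\<in>T_face eta X \<inter> L. a = b)))"

end

theory Submission
  imports Defs
begin

(* Both conditions say that two distinct points of a fiber never vanish in a common coordinate,
   unless the fiber contains a point with no vanishing coordinate. For the face condition this is
   a translation: c \<in> L lies in the X-face of T_eta iff eta - c is a point of the fiber of eta
   vanishing on X, and T^o_eta misses L iff no point of that fiber is strictly positive.

   Given a fully supported Markov basis, let x \<noteq> y in such a boundary fiber vanish at i.
   Subtracting the common part inf x y lands in a fiber of smaller weight (the total coordinate sum
   of its points), so by induction x and y have disjoint supports. The first step x -> p of a path
   to y changes every coordinate, so p vanishes only where x does not, i.e. where y vanishes, and p
   overlaps y wherever y is positive; the induction hypothesis applied to p, y gives p = y, which is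
   impossible at i.

   Conversely, under the face condition every fiber is connected by its own fully supported moves:
   overlapping points are connected inside a fiber of smaller weight, a fiber with a strictly
   positive point z connects everything to z, and in a boundary fiber two disjointly supported
   points differ by a fully supported move. Every pair v, w with v - w \<in> L dominates a minimal one,
   so the moves of the fibers of the finitely many minimal pairs form a Markov basis. Finiteness of
   fibers and of minimal pairs is Dickson's lemma. *)

section \<open>Finite antichains of nonnegative integer vectors\<close>

(* An element not above a fixed s0 lies below it in some coordinate k \<in> I, which leaves finitely
   many values for that coordinate and lets the induction fix it. *)
lemma finite_antichain_agreeing_outside:
  fixes S :: "('a \<Rightarrow> int) set"
  assumes "finite I"
    and "\<And>s. s \<in> S \<Longrightarrow> 0 \<le> s"
    and "\<And>s t. s \<in> S \<Longrightarrow> t \<in> S \<Longrightarrow> s \<le> t \<Longrightarrow> s = t"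
    and "\<And>s t k. s \<in> S \<Longrightarrow> t \<in> S \<Longrightarrow> k \<notin> I \<Longrightarrow> s k = t k"
  shows "finite S"
  using assms
proof (induction I arbitrary: S rule: finite_psubset_induct)
  case (psubset I)
  show ?case
  proof (cases "S = {}")
    case False
    then obtain s0 where s0: "s0 \<in> S" by blast
    define slice where "slice k c = {s \<in> S. s k = c}" for k c
    have "S \<subseteq> insert s0 (\<Union>k\<in>I. \<Union>c\<in>{0..<s0 k}. slice k c)"
    proof
      fix s assume s: "s \<in> S"
      show "s \<in> insert s0 (\<Union>k\<in>I. \<Union>c\<in>{0..<s0 k}. slice k c)"
      proof (cases "s0 \<le> s")
        case True
        then show ?thesis using psubset.prems(2)[OF s0 s] by auto
      next
        case False
        then obtain k where k: "s k < s0 k" by (auto simp: le_fun_def not_le)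
        then have "k \<in> I" using psubset.prems(3)[OF s s0] by fastforce
        moreover have "0 \<le> s k" using psubset.prems(1)[OF s] by (simp add: le_fun_def)
        ultimately show ?thesis using s k by (auto simp: slice_def)
      qed
    qed
    moreover have "finite (slice k c)" if "k \<in> I" for k c
      using that psubset.prems
      by (intro psubset.IH[of "I - {k}"]) (auto simp: slice_def)
    ultimately show ?thesis
      using psubset.hyps by (meson finite_UN_I finite_atLeastLessThan_int finite_insert finite_subset)
  qed simp
qed

lemma finite_nonneg_antichain:
  fixes S :: "('n::finite \<Rightarrow> int) set"
  assumes "\<And>s. s \<in> S \<Longrightarrow> 0 \<le> s"
    and "\<And>s t. s \<in> S \<Longrightarrow> t \<in> S \<Longrightarrow> s \<le> t \<Longrightarrow> s = t"
  shows "finite S"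
  using finite_antichain_agreeing_outside[of UNIV S] assms by simp

lemma finite_nonneg_antichain_pairs:
  fixes S :: "(('n::finite \<Rightarrow> int) \<times> ('n \<Rightarrow> int)) set"
  assumes "\<And>x y. (x, y) \<in> S \<Longrightarrow> 0 \<le> x \<and> 0 \<le> y"
    and "\<And>x y x' y'. (x, y) \<in> S \<Longrightarrow> (x', y') \<in> S \<Longrightarrow> x \<le> x' \<Longrightarrow> y \<le> y' \<Longrightarrow> x = x' \<and> y = y'"
  shows "finite S"
proof -
  let ?join = "\<lambda>(x, y). case_sum x y :: 'n + 'n \<Rightarrow> int"
  have le_join: "?join p \<le> ?join q \<longleftrightarrow> fst p \<le> fst q \<and> snd p \<le> snd q" for p q
    by (auto simp: le_fun_def split: prod.splits sum.splits)
  have "inj ?join"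
    by (auto intro!: injI simp: fun_eq_iff split: prod.splits sum.splits)
  moreover have "finite (?join ` S)"
  proof (rule finite_nonneg_antichain)
    fix s assume "s \<in> ?join ` S"
    then show "0 \<le> s"
      using assms(1) le_join[of "(0, 0)"] by (auto simp: le_fun_def split: sum.splits)
  next
    fix s t assume "s \<in> ?join ` S" "t \<in> ?join ` S" "s \<le> t"
    then show "s = t" using assms(2) le_join by fastforce
  qed
  ultimately show ?thesis by (simp add: finite_image_iff inj_on_subset)
qed

section \<open>Fibers\<close>

lemma sum_UNIV_strict_mono:
  fixes v w :: "'n::finite \<Rightarrow> 'a::ordered_cancel_comm_monoid_add"
  assumes "v < w"
  shows "sum v UNIV < sum w UNIV"
proof -
  obtain k where "v k < w k"
    using assms by (auto simp: less_fun_def le_fun_def less_le_not_le)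
  then show ?thesis using assms by (intro sum_strict_mono_ex1) (auto simp: less_fun_def le_fun_def)
qed

lemma sum_UNIV_nonneg:
  fixes v :: "'n::finite \<Rightarrow> 'a::ordered_comm_monoid_add"
  shows "0 \<le> v \<Longrightarrow> 0 \<le> sum v UNIV"
  by (simp add: le_fun_def sum_nonneg)

lemma nonneg_iff_ge_zero [simp]: "nonneg u \<longleftrightarrow> 0 \<le> u"
  by (simp add: nonneg_def le_fun_def)

lemma antichain_lattice_is_lattice: "antichain_lattice L \<Longrightarrow> is_lattice L"
  by (simp add: antichain_lattice_def)

lemma lattice_uminus: "is_lattice L \<Longrightarrow> a \<in> L \<Longrightarrow> - a \<in> L"
  by (simp add: is_lattice_def)

lemma lattice_diff: "is_lattice L \<Longrightarrow> a \<in> L \<Longrightarrow> b \<in> L \<Longrightarrow> a - b \<in> L"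
  by (metis diff_conv_add_uminus is_lattice_def)

lemma mem_fiber_iff: "v \<in> fiber L u \<longleftrightarrow> v - u \<in> L \<and> 0 \<le> v"
  by (simp add: fiber_def)

lemma self_mem_fiber: "is_lattice L \<Longrightarrow> 0 \<le> u \<Longrightarrow> u \<in> fiber L u"
  by (simp add: mem_fiber_iff is_lattice_def)

lemma fiber_diff_mem: "is_lattice L \<Longrightarrow> x \<in> fiber L u \<Longrightarrow> y \<in> fiber L u \<Longrightarrow> x - y \<in> L"
  using lattice_diff[of L "x - u" "y - u"] by (simp add: mem_fiber_iff)

lemma fiber_eq_if_mem:
  assumes "is_lattice L" "v \<in> fiber L u"
  shows "fiber L v = fiber L u"
proof -
  have "x - v \<in> L \<longleftrightarrow> x - u \<in> L" for x
    using assms lattice_diff[of L "x - u" "v - u"] lattice_diff[of L "x - v" "u - v"]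
      lattice_uminus[of L "v - u"]
    by (auto simp: mem_fiber_iff is_lattice_def)
  then show ?thesis by (auto simp: mem_fiber_iff)
qed

lemma fiber_add_mem: "0 \<le> m \<Longrightarrow> p \<in> fiber L u \<Longrightarrow> p + m \<in> fiber L (u + m)"
  by (simp add: mem_fiber_iff add_nonneg_nonneg)

lemma fiber_sub_mem:
  assumes "is_lattice L" "p \<in> fiber L u" "q \<in> fiber L u" "m \<le> q"
  shows "q - m \<in> fiber L (p - m)"
  using assms fiber_diff_mem[OF assms(1) assms(3,2)] by (simp add: mem_fiber_iff)

lemma fiber_sub_add_mem:
  assumes "is_lattice L" "p \<in> fiber L u" "0 \<le> m" "z \<in> fiber L (p - m)"
  shows "z + m \<in> fiber L u"
  using fiber_add_mem[OF assms(3,4)] fiber_eq_if_mem[OF assms(1,2)] by simp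

lemma fiber_antichain:
  assumes "antichain_lattice L" "x \<in> fiber L u" "y \<in> fiber L u" "x \<le> y"
  shows "x = y"
proof -
  have "x - y \<in> L" "0 \<in> L"
    using antichain_lattice_is_lattice[OF assms(1)] fiber_diff_mem assms(2,3)
    by (auto simp: is_lattice_def)
  moreover have "x - y \<le> 0" using assms(4) by simp
  ultimately show ?thesis using assms(1) unfolding antichain_lattice_def by force
qed

lemma finite_fiber: "antichain_lattice L \<Longrightarrow> finite (fiber L u)"
  by (rule finite_nonneg_antichain) (auto simp: mem_fiber_iff intro: fiber_antichain)

lemma inf_eq_zero_iff:
  fixes x y :: "'a \<Rightarrow> int"
  assumes "0 \<le> x" "0 \<le> y"
  shows "inf x y = 0 \<longleftrightarrow> (\<forall>k. x k = 0 \<or> y k = 0)"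
proof -
  have "min (x k) (y k) = 0 \<longleftrightarrow> x k = 0 \<or> y k = 0" for k
    using le_funD[OF assms(1), of k] le_funD[OF assms(2), of k] by auto
  then show ?thesis by (simp add: fun_eq_iff inf_min)
qed

definition fiber_weight :: "('n::finite \<Rightarrow> int) set \<Rightarrow> ('n \<Rightarrow> int) \<Rightarrow> int" where
  "fiber_weight L u = (\<Sum>p\<in>fiber L u. sum p UNIV)"

lemma fiber_weight_nonneg: "0 \<le> fiber_weight L u"
  by (auto simp: fiber_weight_def mem_fiber_iff intro!: sum_nonneg sum_UNIV_nonneg)

lemma fiber_weight_sub_less:
  assumes ac: "antichain_lattice L" and p: "p \<in> fiber L u"
    and m: "0 \<le> m" "m \<le> p" "m \<noteq> 0"
  shows "nat (fiber_weight L (p - m)) < nat (fiber_weight L u)"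
proof -
  have lat: "is_lattice L" using ac by (rule antichain_lattice_is_lattice)
  let ?F = "fiber L (p - m)"
  have "0 < sum m UNIV" using sum_UNIV_strict_mono[of 0 m] m by (simp add: order_le_neq_trans)
  moreover have "p - m \<in> ?F" using self_mem_fiber[OF lat] m(2) by simp
  then have "0 < card ?F" using finite_fiber[OF ac] card_gt_0_iff by blast
  ultimately have "fiber_weight L (p - m) < fiber_weight L (p - m) + int (card ?F) * sum m UNIV"
    by simp
  also have "\<dots> = (\<Sum>z\<in>?F. sum (z + m) UNIV)"
    by (simp add: fiber_weight_def sum.distrib)
  also have "\<dots> = (\<Sum>q\<in>(\<lambda>z. z + m) ` ?F. sum q UNIV)"
    by (simp add: sum.reindex inj_on_def)
  also have "\<dots> \<le> fiber_weight L u"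
    unfolding fiber_weight_def
    using fiber_sub_add_mem[OF lat p m(1)] finite_fiber[OF ac]
    by (intro sum_mono2) (auto simp: mem_fiber_iff intro: sum_UNIV_nonneg)
  finally show ?thesis using fiber_weight_nonneg[of L "p - m"] by simp
qed

lemma fiber_edge_sym: "fiber_edge L B u v w \<Longrightarrow> fiber_edge L B u w v"
  by (auto simp: fiber_edge_def)

lemma fiber_path_sym: "(fiber_edge L B u)\<^sup>*\<^sup>* x y \<Longrightarrow> (fiber_edge L B u)\<^sup>*\<^sup>* y x"
  by (metis fiber_edge_sym sympD sympI symp_rtranclp)

lemma fiber_edge_cong: "is_lattice L \<Longrightarrow> v \<in> fiber L u \<Longrightarrow> fiber_edge L B v = fiber_edge L B u"
  by (simp add: fiber_edge_def fiber_eq_if_mem fun_eq_iff)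

lemma fiber_path_shift:
  assumes "0 \<le> m" "(fiber_edge L B u)\<^sup>*\<^sup>* p q"
  shows "(fiber_edge L B (u + m))\<^sup>*\<^sup>* (p + m) (q + m)"
  using assms(2)
proof (induction rule: rtranclp_induct)
  case (step y z)
  then have "fiber_edge L B (u + m) (y + m) (z + m)"
    using fiber_add_mem[OF assms(1)] by (auto simp: fiber_edge_def)
  with step.IH show ?case by (metis rtranclp.rtrancl_into_rtrancl)
qed simp

lemma fiber_path_add_common:
  assumes "is_lattice L" "p \<in> fiber L u" "0 \<le> m"
    and "(fiber_edge L B (p - m))\<^sup>*\<^sup>* (p - m) (q - m)"
  shows "(fiber_edge L B u)\<^sup>*\<^sup>* p q"
  using fiber_path_shift[OF assms(3,4)] fiber_edge_cong[OF assms(1,2)] by simp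

lemma markov_basis_path:
  assumes "markov_basis L B" "is_lattice L" "x \<in> fiber L u" "y \<in> fiber L u"
  shows "(fiber_edge L B u)\<^sup>*\<^sup>* x y"
proof -
  have "0 \<le> x" "fiber L x = fiber L u" using assms(2,3) by (simp_all add: mem_fiber_iff fiber_eq_if_mem)
  then have "(fiber_edge L B x)\<^sup>*\<^sup>* x y"
    using assms(1,3,4) by (simp add: markov_basis_def fiber_graph_connected_def)
  then show ?thesis using fiber_edge_cong[OF assms(2,3)] by simp
qed

section \<open>Generic fibers and the face condition\<close>

definition fiber_on_boundary :: "('n::finite \<Rightarrow> int) set \<Rightarrow> ('n \<Rightarrow> int) \<Rightarrow> bool" where
  "fiber_on_boundary L u \<longleftrightarrow> (\<forall>z\<in>fiber L u. \<exists>k. z k = 0)"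

definition fiber_zero_separated :: "('n::finite \<Rightarrow> int) set \<Rightarrow> ('n \<Rightarrow> int) \<Rightarrow> bool" where
  "fiber_zero_separated L u \<longleftrightarrow>
     (\<forall>x\<in>fiber L u. \<forall>y\<in>fiber L u. \<forall>i. x i = 0 \<longrightarrow> y i = 0 \<longrightarrow> x = y)"

definition generic_fibers :: "('n::finite \<Rightarrow> int) set \<Rightarrow> bool" where
  "generic_fibers L \<longleftrightarrow> (\<forall>u. fiber_on_boundary L u \<longrightarrow> fiber_zero_separated L u)"

lemma T_open_disjoint_iff_fiber_on_boundary:
  assumes "is_lattice L"
  shows "T_open eta \<inter> L = {} \<longleftrightarrow> fiber_on_boundary L eta"
proof -
  have mem: "eta - c \<in> fiber L eta \<longleftrightarrow> c \<in> L \<and> c \<le> eta" for c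
    using lattice_uminus[OF assms, of c] lattice_uminus[OF assms, of "- c"]
    by (auto simp: mem_fiber_iff)
  have open_iff: "c \<in> T_open eta \<longleftrightarrow> (\<forall>k. 0 < (eta - c) k)" for c
    by (simp add: T_open_def)
  show ?thesis
  proof
    assume disjoint: "T_open eta \<inter> L = {}"
    show "fiber_on_boundary L eta"
      unfolding fiber_on_boundary_def
    proof (rule ballI, rule ccontr)
      fix z assume z: "z \<in> fiber L eta" and "\<not> (\<exists>k. z k = 0)"
      then have "\<forall>k. 0 < z k" by (auto simp: mem_fiber_iff le_fun_def order_less_le)
      then show False using disjoint mem[of "eta - z"] open_iff[of "eta - z"] z by auto
    qed
  next
    assume boundary: "fiber_on_boundary L eta"
    show "T_open eta \<inter> L = {}"
    proof (rule ccontr)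
      assume "T_open eta \<inter> L \<noteq> {}"
      then obtain c where c: "c \<in> L" "\<forall>k. 0 < (eta - c) k" using open_iff by blast
      then have "c \<le> eta" by (auto simp: le_fun_def intro: less_imp_le)
      then have "eta - c \<in> fiber L eta" using mem c(1) by blast
      then obtain k where "(eta - c) k = 0" using boundary unfolding fiber_on_boundary_def by blast
      then show False using c(2) by (metis less_irrefl)
    qed
  qed
qed

lemma T_face_inter_iff:
  assumes "is_lattice L"
  shows "c \<in> T_face eta X \<inter> L \<longleftrightarrow> eta - c \<in> fiber L eta \<and> (\<forall>i\<in>X. (eta - c) i = 0)"
  using lattice_uminus[OF assms, of c] lattice_uminus[OF assms, of "- c"]
  by (auto simp: T_face_def T_cone_def mem_fiber_iff)

lemma generic_faces_iff_generic_fibers: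
  assumes "is_lattice L"
  shows "generic_faces L \<longleftrightarrow> generic_fibers L"
proof
  assume faces: "generic_faces L"
  show "generic_fibers L"
    unfolding generic_fibers_def fiber_zero_separated_def
  proof (intro allI impI ballI)
    fix u x y i
    assume "fiber_on_boundary L u" "x \<in> fiber L u" "y \<in> fiber L u" "x i = 0" "y i = 0"
    then have "u - x \<in> T_face u {i} \<inter> L" "u - y \<in> T_face u {i} \<inter> L" "T_open u \<inter> L = {}"
      using T_face_inter_iff[OF assms] T_open_disjoint_iff_fiber_on_boundary[OF assms] by simp_all
    then have "u - x = u - y" using faces unfolding generic_faces_def by blast
    then show "x = y" by simp
  qed
next
  assume fibers: "generic_fibers L"
  show "generic_faces L"
    unfolding generic_faces_def
  proof (intro allI impI ballI)
    fix eta X a b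
    assume "T_open eta \<inter> L = {}" "X \<noteq> {}" "a \<in> T_face eta X \<inter> L" "b \<in> T_face eta X \<inter> L"
    moreover obtain i where "i \<in> X" using \<open>X \<noteq> {}\<close> by blast
    ultimately have "fiber_on_boundary L eta" "eta - a \<in> fiber L eta" "eta - b \<in> fiber L eta"
      "(eta - a) i = 0" "(eta - b) i = 0"
      using T_face_inter_iff[OF assms] T_open_disjoint_iff_fiber_on_boundary[OF assms] by blast+
    then have "eta - a = eta - b"
      using fibers unfolding generic_fibers_def fiber_zero_separated_def by blast
    then show "a = b" by simp
  qed
qed

section \<open>A fully supported Markov basis makes the fibers generic\<close>

lemma fiber_on_boundary_sub_common:
  assumes "is_lattice L" "fiber_on_boundary L u" "p \<in> fiber L u" "0 \<le> m"
  shows "fiber_on_boundary L (p - m)"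
  unfolding fiber_on_boundary_def
proof
  fix z assume "z \<in> fiber L (p - m)"
  then have "0 \<le> z" "z + m \<in> fiber L u"
    using fiber_sub_add_mem[OF assms(1,3,4)] by (auto simp: mem_fiber_iff)
  then obtain k where "z k + m k = 0" using assms(2) unfolding fiber_on_boundary_def by fastforce
  moreover have "0 \<le> z k" "0 \<le> m k" using \<open>0 \<le> z\<close> assms(4) by (auto simp: le_fun_def)
  ultimately show "\<exists>k. z k = 0" by (intro exI[of _ k]) linarith
qed

lemma fully_supported_move_to_overlapping_point:
  assumes ac: "antichain_lattice L" and markov: "markov_basis L B"
    and supp: "\<forall>b\<in>B. fully_supported b" and boundary: "fiber_on_boundary L u"
    and x: "x \<in> fiber L u" and y: "y \<in> fiber L u"
    and "x i = 0" "y i = 0" "x \<noteq> y" "inf x y = 0"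
  shows "\<exists>p\<in>fiber L u. \<exists>j. p \<noteq> y \<and> p j = 0 \<and> y j = 0 \<and> inf p y \<noteq> 0"
proof -
  have "0 \<le> x" "0 \<le> y" using x y by (simp_all add: mem_fiber_iff)
  then have disjoint: "x k = 0 \<or> y k = 0" for k using \<open>inf x y = 0\<close> inf_eq_zero_iff by blast
  have "\<not> y \<le> x" using fiber_antichain[OF ac y x] \<open>x \<noteq> y\<close> by auto
  then obtain b where "y b \<noteq> 0" "x b = 0"
    using disjoint \<open>0 \<le> x\<close> by (metis le_fun_def zero_fun_def)
  obtain p where edge: "fiber_edge L B u x p"
    using markov_basis_path[OF markov antichain_lattice_is_lattice[OF ac] x y] \<open>x \<noteq> y\<close>
    by (auto elim: converse_rtranclpE)
  then have p: "p \<in> fiber L u" by (simp add: fiber_edge_def)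
  have moved: "p k \<noteq> x k" for k
  proof -
    obtain g where "g \<in> B" "g = x - p \<or> g = p - x" using edge by (auto simp: fiber_edge_def)
    then have "g k \<noteq> 0" using supp by (simp add: fully_supported_def)
    with \<open>g = x - p \<or> g = p - x\<close> show ?thesis by auto
  qed
  obtain j where "p j = 0" using boundary p unfolding fiber_on_boundary_def by blast
  moreover have "y j = 0" using disjoint moved \<open>p j = 0\<close> by metis
  moreover have "p \<noteq> y" using moved \<open>x i = 0\<close> \<open>y i = 0\<close> by metis
  moreover have "inf p y \<noteq> 0"
    using inf_eq_zero_iff[of p y] p \<open>0 \<le> y\<close> moved[of b] \<open>x b = 0\<close> \<open>y b \<noteq> 0\<close>
    by (auto simp: mem_fiber_iff)
  ultimately show ?thesis using p by blast
qed

lemma generic_fibers_if_fully_supported_markov_basis: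
  assumes ac: "antichain_lattice L" and markov: "markov_basis L B"
    and supp: "\<forall>b\<in>B. fully_supported b"
  shows "generic_fibers L"
  unfolding generic_fibers_def
proof (intro allI impI)
  have lat: "is_lattice L" using ac by (rule antichain_lattice_is_lattice)
  fix u assume "fiber_on_boundary L u"
  then show "fiber_zero_separated L u"
  proof (induction "nat (fiber_weight L u)" arbitrary: u rule: less_induct)
    case less
    have overlapping: "p = q"
      if p: "p \<in> fiber L u" and q: "q \<in> fiber L u" and "p j = 0" "q j = 0" and "inf p q \<noteq> 0"
      for p q j
    proof -
      define m where "m = inf p q"
      have m: "0 \<le> m" "m \<le> p" "m \<le> q" using p q by (auto simp: m_def mem_fiber_iff)
      have "fiber_zero_separated L (p - m)"
        using less.hyps fiber_weight_sub_less[OF ac p m(1,2)] \<open>inf p q \<noteq> 0\<close>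
          fiber_on_boundary_sub_common[OF lat less.prems p m(1)]
        by (simp add: m_def)
      moreover have "p - m \<in> fiber L (p - m)" "q - m \<in> fiber L (p - m)"
        using fiber_sub_mem[OF lat p] p q m by auto
      moreover have "(p - m) j = 0" "(q - m) j = 0" using \<open>p j = 0\<close> \<open>q j = 0\<close> by (simp_all add: m_def)
      ultimately show "p = q" unfolding fiber_zero_separated_def by fastforce
    qed
    show ?case
      unfolding fiber_zero_separated_def
    proof (intro ballI allI impI, rule ccontr)
      fix x y i
      assume x: "x \<in> fiber L u" and y: "y \<in> fiber L u" and "x i = 0" "y i = 0" "x \<noteq> y"
      then have "inf x y = 0" using overlapping by blast
      then obtain p j where "p \<in> fiber L u" "p \<noteq> y" "p j = 0" "y j = 0" "inf p y \<noteq> 0"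
        using fully_supported_move_to_overlapping_point[OF ac markov supp less.prems x y]
          \<open>x i = 0\<close> \<open>y i = 0\<close> \<open>x \<noteq> y\<close> by blast
      then show False using overlapping y by blast
    qed
  qed
qed

section \<open>Generic fibers admit a fully supported Markov basis\<close>

definition fully_supported_moves :: "('n::finite \<Rightarrow> int) set \<Rightarrow> ('n \<Rightarrow> int) \<Rightarrow> ('n \<Rightarrow> int) set" where
  "fully_supported_moves L u =
     {p - q | p q. p \<in> fiber L u \<and> q \<in> fiber L u \<and> fully_supported (p - q)}"

lemma finite_fully_supported_moves:
  assumes "antichain_lattice L"
  shows "finite (fully_supported_moves L u)"
proof -
  have "fully_supported_moves L u \<subseteq> (\<lambda>(p, q). p - q) ` (fiber L u \<times> fiber L u)"
    by (auto simp: fully_supported_moves_def)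
  moreover have "finite ((\<lambda>(p, q). p - q) ` (fiber L u \<times> fiber L u))"
    using finite_fiber[OF assms] by simp
  ultimately show ?thesis by (rule finite_subset)
qed

lemma fully_supported_moves_subset_lattice:
  "is_lattice L \<Longrightarrow> fully_supported_moves L u \<subseteq> L"
  by (auto simp: fully_supported_moves_def intro: fiber_diff_mem)

lemma fully_supported_moves_sub_common:
  assumes "is_lattice L" "p \<in> fiber L u" "0 \<le> m"
  shows "fully_supported_moves L (p - m) \<subseteq> fully_supported_moves L u"
proof
  fix g assume "g \<in> fully_supported_moves L (p - m)"
  then obtain p' q' where "p' \<in> fiber L (p - m)" "q' \<in> fiber L (p - m)" "g = p' - q'"
    "fully_supported g"
    by (auto simp: fully_supported_moves_def)
  moreover have "p' + m \<in> fiber L u" "q' + m \<in> fiber L u" "g = (p' + m) - (q' + m)"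
    using calculation fiber_sub_add_mem[OF assms] by simp_all
  ultimately show "g \<in> fully_supported_moves L u"
    unfolding fully_supported_moves_def by (intro CollectI exI[of _ "p' + m"] exI[of _ "q' + m"]) auto
qed

lemma inf_ne_zero_if_nowhere_zero:
  assumes ac: "antichain_lattice L" and w: "w \<in> fiber L u" and z: "z \<in> fiber L u"
    and nowhere_zero: "\<forall>k. z k \<noteq> 0"
  shows "inf w z \<noteq> 0"
proof -
  have "0 \<le> w" "0 \<le> z" using w z by (simp_all add: mem_fiber_iff)
  have "\<not> w \<le> 0"
    using fiber_antichain[OF ac w z] nowhere_zero \<open>0 \<le> w\<close> \<open>0 \<le> z\<close>
    by (metis order.antisym zero_fun_def)
  then obtain k where "w k \<noteq> 0" by (metis le_funI order.refl zero_fun_def)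
  then show ?thesis using inf_eq_zero_iff[OF \<open>0 \<le> w\<close> \<open>0 \<le> z\<close>] nowhere_zero by blast
qed

lemma fully_supported_diff_if_zero_separated:
  assumes "fiber_zero_separated L u" "x \<in> fiber L u" "y \<in> fiber L u" "x \<noteq> y" "inf x y = 0"
  shows "fully_supported (x - y)"
  unfolding fully_supported_def
proof
  fix k
  have "x k = 0 \<or> y k = 0"
    using assms(2,3,5) inf_eq_zero_iff[of x y] by (simp add: mem_fiber_iff)
  moreover have "\<not> (x k = 0 \<and> y k = 0)"
    using assms(1-4) unfolding fiber_zero_separated_def by blast
  ultimately show "(x - y) k \<noteq> 0" by auto
qed

lemma fiber_path_if_moves_subset:
  assumes ac: "antichain_lattice L" and generic: "generic_fibers L"
  shows "fully_supported_moves L u \<subseteq> B \<Longrightarrow> x \<in> fiber L u \<Longrightarrow> y \<in> fiber L u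
    \<Longrightarrow> (fiber_edge L B u)\<^sup>*\<^sup>* x y"
proof (induction "nat (fiber_weight L u)" arbitrary: u x y rule: less_induct)
  case less
  have lat: "is_lattice L" using ac by (rule antichain_lattice_is_lattice)
  have overlapping: "(fiber_edge L B u)\<^sup>*\<^sup>* p q"
    if p: "p \<in> fiber L u" and q: "q \<in> fiber L u" and "inf p q \<noteq> 0" for p q
  proof -
    define m where "m = inf p q"
    have m: "0 \<le> m" "m \<le> p" "m \<le> q" using p q by (auto simp: m_def mem_fiber_iff)
    have "(fiber_edge L B (p - m))\<^sup>*\<^sup>* (p - m) (q - m)"
      using less.hyps[OF fiber_weight_sub_less[OF ac p m(1,2)]] \<open>inf p q \<noteq> 0\<close>
        fully_supported_moves_sub_common[OF lat p m(1)] less.prems(1) fiber_sub_mem[OF lat p] p q m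
      by (auto simp: m_def)
    then show ?thesis by (rule fiber_path_add_common[OF lat p m(1)])
  qed
  show ?case
  proof (cases "fiber_on_boundary L u")
    case False
    then obtain z where "z \<in> fiber L u" "\<forall>k. z k \<noteq> 0"
      unfolding fiber_on_boundary_def by blast
    then have "(fiber_edge L B u)\<^sup>*\<^sup>* w z" if "w \<in> fiber L u" for w
      using overlapping inf_ne_zero_if_nowhere_zero[OF ac] that by blast
    then show ?thesis using less.prems(2,3) fiber_path_sym by (metis rtranclp_trans)
  next
    case True
    then have "fiber_zero_separated L u" using generic by (simp add: generic_fibers_def)
    then have "x - y \<in> B" if "x \<noteq> y" "inf x y = 0"
      using fully_supported_diff_if_zero_separated less.prems that
      unfolding fully_supported_moves_def by blast
    then show ?thesis
      using overlapping[OF less.prems(2,3)] less.prems(2,3)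
      by (cases "x = y \<or> inf x y \<noteq> 0") (auto simp: fiber_edge_def)
  qed
qed

definition fiber_pairs :: "('n::finite \<Rightarrow> int) set \<Rightarrow> (('n \<Rightarrow> int) \<times> ('n \<Rightarrow> int)) set" where
  "fiber_pairs L = {(v, w). 0 \<le> v \<and> 0 \<le> w \<and> v - w \<in> L \<and> v \<noteq> w}"

definition minimal_fiber_pairs :: "('n::finite \<Rightarrow> int) set \<Rightarrow> (('n \<Rightarrow> int) \<times> ('n \<Rightarrow> int)) set" where
  "minimal_fiber_pairs L = {(v, w) \<in> fiber_pairs L.
     \<forall>(v', w') \<in> fiber_pairs L. v' \<le> v \<longrightarrow> w' \<le> w \<longrightarrow> v' = v \<and> w' = w}"

lemma finite_minimal_fiber_pairs: "finite (minimal_fiber_pairs L)"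
proof (rule finite_nonneg_antichain_pairs)
  fix x y assume "(x, y) \<in> minimal_fiber_pairs L"
  then show "0 \<le> x \<and> 0 \<le> y" by (simp add: minimal_fiber_pairs_def fiber_pairs_def)
next
  fix x y x' y'
  assume "(x, y) \<in> minimal_fiber_pairs L" "(x', y') \<in> minimal_fiber_pairs L" "x \<le> x'" "y \<le> y'"
  then show "x = x' \<and> y = y'" unfolding minimal_fiber_pairs_def by fast
qed

lemma minimal_fiber_pair_below:
  assumes "(x, y) \<in> fiber_pairs L"
  shows "\<exists>(v, w) \<in> minimal_fiber_pairs L. v \<le> x \<and> w \<le> y"
proof -
  define size where "size p = nat (sum (fst p) UNIV + sum (snd p) UNIV)"
    for p :: "('a \<Rightarrow> int) \<times> ('a \<Rightarrow> int)"
  let ?P = "\<lambda>p. p \<in> fiber_pairs L \<and> fst p \<le> x \<and> snd p \<le> y"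
  obtain v w where vw: "?P (v, w)" and least: "\<And>p. ?P p \<Longrightarrow> size (v, w) \<le> size p"
    using ex_has_least_nat[of ?P "(x, y)" size] assms by force
  have "v' = v \<and> w' = w" if "(v', w') \<in> fiber_pairs L" "v' \<le> v" "w' \<le> w" for v' w'
  proof (rule ccontr)
    assume "\<not> (v' = v \<and> w' = w)"
    then have "v' < v \<or> w' < w" using that(2,3) by (auto simp: order_less_le)
    then have "sum v' UNIV + sum w' UNIV < sum v UNIV + sum w UNIV"
      using sum_UNIV_strict_mono that(2,3) sum_mono[of UNIV v' v] sum_mono[of UNIV w' w]
      by (fastforce simp: le_fun_def)
    moreover have "0 \<le> sum v' UNIV" "0 \<le> sum w' UNIV"
      using that(1) by (auto simp: fiber_pairs_def intro: sum_UNIV_nonneg)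
    moreover have "size (v, w) \<le> size (v', w')"
      using least vw that order_trans by fastforce
    ultimately show False by (simp add: size_def)
  qed
  then have "(v, w) \<in> minimal_fiber_pairs L" using vw by (auto simp: minimal_fiber_pairs_def)
  then show ?thesis using vw by auto
qed

lemma fiber_path_if_minimal_pairs_connected:
  assumes lat: "is_lattice L"
    and minimal: "\<And>v w. (v, w) \<in> minimal_fiber_pairs L \<Longrightarrow> (fiber_edge L B v)\<^sup>*\<^sup>* v w"
  shows "0 \<le> x \<Longrightarrow> 0 \<le> y \<Longrightarrow> x - y \<in> L \<Longrightarrow> (fiber_edge L B x)\<^sup>*\<^sup>* x y"
proof (induction "nat (sum x UNIV + sum y UNIV)" arbitrary: x y rule: less_induct)
  case less
  show ?case
  proof (cases "x = y")
    case False
    then obtain v w where vw: "(v, w) \<in> minimal_fiber_pairs L" "v \<le> x" "w \<le> y"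
      using minimal_fiber_pair_below[of x y L] less.prems by (auto simp: fiber_pairs_def)
    then have "0 \<le> v" "0 \<le> w" "v - w \<in> L" "v \<noteq> w"
      by (auto simp: minimal_fiber_pairs_def fiber_pairs_def)
    define c d where "c = x - v" and "d = y - w"
    have "0 \<le> c" "0 \<le> d" using vw by (simp_all add: c_def d_def)
    have "c - d \<in> L"
      using lattice_diff[OF lat less.prems(3) \<open>v - w \<in> L\<close>] by (simp add: c_def d_def algebra_simps)
    have "0 < sum v UNIV + sum w UNIV"
      using sum_UNIV_strict_mono[of 0 v] sum_UNIV_strict_mono[of 0 w] \<open>0 \<le> v\<close> \<open>0 \<le> w\<close> \<open>v \<noteq> w\<close>
        sum_UNIV_nonneg[of v] sum_UNIV_nonneg[of w]
      by (fastforce simp: order_less_le)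
    moreover have "sum x UNIV = sum c UNIV + sum v UNIV" "sum y UNIV = sum d UNIV + sum w UNIV"
      by (simp_all add: c_def d_def sum.distrib[symmetric])
    moreover have "0 \<le> sum c UNIV" "0 \<le> sum d UNIV"
      using \<open>0 \<le> c\<close> \<open>0 \<le> d\<close> by (simp_all add: sum_UNIV_nonneg)
    ultimately have "(fiber_edge L B c)\<^sup>*\<^sup>* c d"
      using less.hyps[OF _ \<open>0 \<le> c\<close> \<open>0 \<le> d\<close> \<open>c - d \<in> L\<close>] by simp
    then have "(fiber_edge L B (c + w))\<^sup>*\<^sup>* (c + w) (d + w)"
      by (rule fiber_path_shift[OF \<open>0 \<le> w\<close>])
    moreover have "c + w \<in> fiber L x"
      using lattice_uminus[OF lat \<open>v - w \<in> L\<close>] \<open>0 \<le> c\<close> \<open>0 \<le> w\<close>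
      by (simp add: mem_fiber_iff c_def)
    ultimately have "(fiber_edge L B x)\<^sup>*\<^sup>* (w + c) y"
      using fiber_edge_cong[OF lat] by (simp add: d_def add.commute)
    moreover have "(fiber_edge L B x)\<^sup>*\<^sup>* x (w + c)"
      using fiber_path_shift[OF \<open>0 \<le> c\<close> minimal[OF vw(1)]] by (simp add: c_def)
    ultimately show ?thesis by (rule rtranclp_trans[rotated])
  qed simp
qed

lemma markov_basis_if_minimal_pairs_connected:
  assumes lat: "is_lattice L" and "finite B" "B \<subseteq> L"
    and minimal: "\<And>v w. (v, w) \<in> minimal_fiber_pairs L \<Longrightarrow> (fiber_edge L B v)\<^sup>*\<^sup>* v w"
  shows "markov_basis L B"
  unfolding markov_basis_def fiber_graph_connected_def
proof (intro conjI allI impI ballI assms(2,3))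
  fix u v w assume v: "v \<in> fiber L u" and w: "w \<in> fiber L u"
  then have "(fiber_edge L B v)\<^sup>*\<^sup>* v w"
    using fiber_path_if_minimal_pairs_connected[OF lat minimal] fiber_diff_mem[OF lat v w]
    by (simp add: mem_fiber_iff)
  then show "(fiber_edge L B u)\<^sup>*\<^sup>* v w" using fiber_edge_cong[OF lat v] by simp
qed

lemma fully_supported_markov_basis_if_generic_fibers:
  assumes ac: "antichain_lattice L" and generic: "generic_fibers L"
  shows "\<exists>B. markov_basis L B \<and> (\<forall>b\<in>B. fully_supported b)"
proof -
  have lat: "is_lattice L" using ac by (rule antichain_lattice_is_lattice)
  define B where "B = (\<Union>(v, w) \<in> minimal_fiber_pairs L. fully_supported_moves L v)"
  have "finite B"
    unfolding B_def using finite_minimal_fiber_pairs finite_fully_supported_moves[OF ac]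
    by (intro finite_UN_I) (auto split: prod.splits)
  moreover have "B \<subseteq> L" using fully_supported_moves_subset_lattice[OF lat] by (auto simp: B_def)
  moreover have "(fiber_edge L B v)\<^sup>*\<^sup>* v w" if vw: "(v, w) \<in> minimal_fiber_pairs L" for v w
  proof (rule fiber_path_if_moves_subset[OF ac generic])
    show "fully_supported_moves L v \<subseteq> B" using vw by (auto simp: B_def)
    show "v \<in> fiber L v" "w \<in> fiber L v"
      using vw lattice_uminus[OF lat, of "v - w"] self_mem_fiber[OF lat]
      by (auto simp: minimal_fiber_pairs_def fiber_pairs_def mem_fiber_iff)
  qed
  ultimately have "markov_basis L B" by (rule markov_basis_if_minimal_pairs_connected[OF lat])
  moreover have "\<forall>b\<in>B. fully_supported b" by (auto simp: B_def fully_supported_moves_def)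
  ultimately show ?thesis by blast
qed

lemma minimal_markov_basis_subset:
  assumes "markov_basis L B"
  shows "\<exists>C \<subseteq> B. minimal_markov_basis L C"
proof -
  have "finite B" using assms by (simp add: markov_basis_def)
  then show ?thesis using assms
  proof (induction B rule: finite_psubset_induct)
    case (psubset B)
    show ?case
    proof (cases "minimal_markov_basis L B")
      case False
      then obtain C where "C \<subset> B" "markov_basis L C"
        using psubset.prems unfolding minimal_markov_basis_def by blast
      with psubset.IH obtain C' where "C' \<subseteq> C" "minimal_markov_basis L C'" by blast
      then show ?thesis using \<open>C \<subset> B\<close> by blast
    qed blast
  qed
qed

theorem mainTheorem10:
  fixes L :: "('n::finite \<Rightarrow> int) set"
  assumes "antichain_lattice L"
  shows "generic_markov L \<longleftrightarrow> generic_faces L"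
proof -
  have lat: "is_lattice L" using assms by (rule antichain_lattice_is_lattice)
  have "generic_markov L \<longleftrightarrow> generic_fibers L"
  proof
    assume "generic_markov L"
    then obtain B where "minimal_markov_basis L B" "\<forall>b\<in>B. fully_supported b"
      by (auto simp: generic_markov_def)
    then show "generic_fibers L"
      using generic_fibers_if_fully_supported_markov_basis[OF assms]
      unfolding minimal_markov_basis_def by blast
  next
    assume "generic_fibers L"
    then obtain B where "markov_basis L B" "\<forall>b\<in>B. fully_supported b"
      using fully_supported_markov_basis_if_generic_fibers[OF assms] by blast
    then show "generic_markov L"
      using minimal_markov_basis_subset unfolding generic_markov_def by blast
  qed
  then show ?thesis using generic_faces_iff_generic_fibers[OF lat] by simp
qed

end
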